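(* Let $G=(\mathfrak{N},\mathfrak{T},\mathfrak{R},\mathfrak{S})$ be a context-free grammar, $\Sigma$ a set of characters, $(\textsl{Lex},\textsl{Sel})$ a local lexing and $D\in\Sigma^*$. For $k\in\{0,\ldots,|D|\}$ let $\mathcal{Z}_k^\infty=\bigcup_{u\ge0}\mathcal{Z}_k^u$. Then for every token sequence $p$: $p\in\mathfrak{P}$ if and only if (a) for all $0\le i<|p|$, $p_i\in\mathcal{Z}_{|\overline{p_0\ldots p_{i-1}}|}^{\infty}$, and (b) $[p]\in\mathcal{L}_{\text{prefix}}$.
   Context: Notation: for a set $U$, $U^*$ is the set of finite sequences over $U$, $\varepsilon$ the empty sequence, juxtaposition is concatenation, $|\alpha|$ the length and $\alpha_i$ ($0\le i<|\alpha|$) the $i$-th element. A context-free grammar $(\mathfrak{N},\mathfrak{T},\mathfrak{R},\mathfrak{S})$ has disjoint nonterminals $\mathfrak{N}$ and terminals $\mathfrak{T}$, rules $\mathfrak{R}\subseteq\mathfrak{N}\times(\mathfrak{N}\cup\mathfrak{T})^*$ (written $N\rightarrow\alpha$), start symbol $\mathfrak{S}$; $\overset{*}{\Rightarrow}$ is the reflexive-transitive closure of one-step rewriting by rules. $\mathcal{L}_{\text{prefix}}=\{w\in\mathfrak{T}^*\mid\exists\alpha\in(\mathfrak{N}\cup\mathfrak{T})^*.\ \mathfrak{S}\overset{*}{\Rightarrow}w\alpha\}$. Tokens: a token is a pair $x=(t,c)\in\mathfrak{T}\times\Sigma^*$; $[x]=t$, $\overline{x}=c$. For a token sequence (path) $q=x_0\ldots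 x_r$, $[q]=[x_0]\ldots[x_r]$ and $\overline{q}=\overline{x_0}\ldots\overline{x_r}$ (for $i=0$, $\overline{p_0\ldots p_{i-1}}$ is the empty sequence). Local lexing: a pair $(\textsl{Lex},\textsl{Sel})$ where $\textsl{Lex}$ assigns to each $t\in\mathfrak{T}$ a function $\textsl{Lex}(t)$ which, given $D\in\Sigma^*$ and $k\in\{0,\ldots,|D|\}$, returns a set of tokens $(t,c)$ with $k+|c|\le|D|$ and $c_i=D_{k+i}$ for $0\le i\le|c|-1$; and $\textsl{Sel}$ maps any two token sets $A\subseteq B$ to a token set with $A\subseteq\textsl{Sel}(A,B)\subseteq B$. Path sets: $\operatorname{limit} f\,X=\bigcup_{n\ge0}f^n(X)$. $\operatorname{Append}_k\,T\,P=P\cup\{pt\mid p\in P,\ |\overline{p}|=k,\ t\in T,\ [pt]\in\mathcal{L}_{\text{prefix}}\}$. For $k\in\{0,\ldots,|D|\}$: $\mathcal{X}_k=\{x\in\mathfrak{T}\times\Sigma^*\mid x\in\textsl{Lex}([x])(D,k)\}$; $\mathcal{P}_0^0=\{\varepsilon\}$; $\mathcal{W}_k^u=\{x\in\mathcal{X}_k\mid\exists p\in\mathcal{P}_k^u.\ |\overline{p}|=k\wedge[px]\in\mathcal{L}_{\text{prefix}}\}$; $\mathcal{Z}_k^0=\emptyset$; $\mathcal{Z}_k^{u+1}=\textsl{Sel}(\mathcal{Z}_k^u,\mathcal{W}_k^u)$; $\mathcal{P}_k^{u+1}=\operatorname{limit}(\operatorname{Append}_k\,\mathcal{Z}_k^{u+1})\,\mathcal{P}_k^u$;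 $\mathcal{P}_k^\infty=\bigcup_u\mathcal{P}_k^u$; $\mathcal{P}_{k+1}^0=\mathcal{P}_k^\infty$. Finally $\mathfrak{P}=\mathcal{P}_{|D|}^\infty$. *)

theory Defs
  imports Main
begin

text \<open>Symbols: nonterminals are Inl, terminals are Inr (so the two sets are disjoint).\<close>
type_synonym ('n, 't) symbol = "'n + 't"
type_synonym ('n, 't) rule = "'n \<times> ('n, 't) symbol list"

definition wf_grammar ::
  "'n set \<Rightarrow> 't set \<Rightarrow> ('n, 't) rule set \<Rightarrow> 'n \<Rightarrow> bool" where
  "wf_grammar \<NN> \<TT> \<RR> \<SS> \<longleftrightarrow>
     \<RR> \<subseteq> \<NN> \<times> lists (Inl ` \<NN> \<union> Inr ` \<TT>) \<and> \<SS> \<in> \<NN>"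

definition derives1 :: "('n, 't) rule set \<Rightarrow> ('n, 't) symbol list \<Rightarrow> ('n, 't) symbol list \<Rightarrow> bool" where
  "derives1 \<RR> u v \<longleftrightarrow>
     (\<exists>\<alpha> \<beta> N \<gamma>. u = \<alpha> @ [Inl N] @ \<beta> \<and> v = \<alpha> @ \<gamma> @ \<beta> \<and> (N, \<gamma>) \<in> \<RR>)"

definition derives :: "('n, 't) rule set \<Rightarrow> ('n, 't) symbol list \<Rightarrow> ('n, 't) symbol list \<Rightarrow> bool" where
  "derives \<RR> = (derives1 \<RR>)\<^sup>*\<^sup>*"

definition L_prefix :: "'t set \<Rightarrow> ('n, 't) rule set \<Rightarrow> 'n \<Rightarrow> 't list set" where
  "L_prefix \<TT> \<RR> \<SS> =
     {w. w \<in> lists \<TT> \<and> (\<exists>\<alpha>. derives \<RR> [Inl \<SS>] (map Inr w @ \<alpha>))}"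

type_synonym ('t, 'c) token = "'t \<times> 'c list"
type_synonym ('t, 'c) path = "('t, 'c) token list"

definition terms :: "('t, 'c) path \<Rightarrow> 't list" where
  "terms p = map fst p"

definition chars :: "('t, 'c) path \<Rightarrow> 'c list" where
  "chars p = concat (map snd p)"

type_synonym ('t, 'c) lexer = "'t \<Rightarrow> 'c list \<Rightarrow> nat \<Rightarrow> ('t, 'c) token set"
type_synonym ('t, 'c) selector = "('t, 'c) token set \<Rightarrow> ('t, 'c) token set \<Rightarrow> ('t, 'c) token set"

definition is_lexer :: "'t set \<Rightarrow> 'c set \<Rightarrow> ('t, 'c) lexer \<Rightarrow> bool" where
  "is_lexer \<TT> \<Sigma> Lex \<longleftrightarrow>
     (\<forall>t\<in>\<TT>. \<forall>D\<in>lists \<Sigma>. \<forall>k\<le>length D. \<forall>x\<in>Lex t D k.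
        fst x = t \<and> k + length (snd x) \<le> length D \<and>
        (\<forall>i<length (snd x). snd x ! i = D ! (k + i)))"

definition is_selector :: "'t set \<Rightarrow> 'c set \<Rightarrow> ('t, 'c) selector \<Rightarrow> bool" where
  "is_selector \<TT> \<Sigma> Sel \<longleftrightarrow>
     (\<forall>A B. B \<subseteq> \<TT> \<times> lists \<Sigma> \<longrightarrow> A \<subseteq> B \<longrightarrow> A \<subseteq> Sel A B \<and> Sel A B \<subseteq> B)"

definition local_lexing :: "'t set \<Rightarrow> 'c set \<Rightarrow> ('t, 'c) lexer \<Rightarrow> ('t, 'c) selector \<Rightarrow> bool" where
  "local_lexing \<TT> \<Sigma> Lex Sel \<longleftrightarrow> is_lexer \<TT> \<Sigma> Lex \<and> is_selector \<TT> \<Sigma> Sel"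

definition limit :: "('a set \<Rightarrow> 'a set) \<Rightarrow> 'a set \<Rightarrow> 'a set" where
  "limit f X = (\<Union>n. (f ^^ n) X)"

definition Append :: "'t list set \<Rightarrow> nat \<Rightarrow> ('t, 'c) token set \<Rightarrow> ('t, 'c) path set \<Rightarrow> ('t, 'c) path set" where
  "Append Lp k Tk P =
     P \<union> {p @ [t] | p t. p \<in> P \<and> length (chars p) = k \<and> t \<in> Tk \<and> terms (p @ [t]) \<in> Lp}"

text \<open>The tokens \<open>X_k\<close>; empty for \<open>k > |D|\<close>, where \<open>X_k\<close> is not defined in the paper.\<close>
definition Xk :: "'t set \<Rightarrow> 'c set \<Rightarrow> ('t, 'c) lexer \<Rightarrow> 'c list \<Rightarrow> nat \<Rightarrow> ('t, 'c) token set" where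
  "Xk \<TT> \<Sigma> Lex D k =
     {x. x \<in> \<TT> \<times> lists \<Sigma> \<and> k \<le> length D \<and> x \<in> Lex (fst x) D k}"

definition Wk :: "'t list set \<Rightarrow> ('t, 'c) token set \<Rightarrow> nat \<Rightarrow> ('t, 'c) path set \<Rightarrow> ('t, 'c) token set" where
  "Wk Lp X k P = {x \<in> X. \<exists>p\<in>P. length (chars p) = k \<and> terms (p @ [x]) \<in> Lp}"

text \<open>One round at position k: from \<open>(P_k^u, Z_k^u)\<close> to \<open>(P_k^{u+1}, Z_k^{u+1})\<close>,
  where \<open>Z_k^{u+1} = Sel(Z_k^u, W_k^u)\<close> and \<open>P_k^{u+1} = limit (Append_k Z_k^{u+1}) P_k^u\<close>.\<close>
definition step :: "'t list set \<Rightarrow> (nat \<Rightarrow> ('t, 'c) token set) \<Rightarrow> ('t, 'c) selector \<Rightarrow> nat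
    \<Rightarrow> ('t, 'c) path set \<times> ('t, 'c) token set \<Rightarrow> ('t, 'c) path set \<times> ('t, 'c) token set" where
  "step Lp X Sel k PZ =
     (let Z' = Sel (snd PZ) (Wk Lp (X k) k (fst PZ))
      in (limit (Append Lp k Z') (fst PZ), Z'))"

primrec P0 :: "'t list set \<Rightarrow> (nat \<Rightarrow> ('t, 'c) token set) \<Rightarrow> ('t, 'c) selector \<Rightarrow> nat
    \<Rightarrow> ('t, 'c) path set" where
  "P0 Lp X Sel 0 = {[]}"
| "P0 Lp X Sel (Suc k) = (\<Union>u. fst ((step Lp X Sel k ^^ u) (P0 Lp X Sel k, {})))"

definition Pku :: "'t list set \<Rightarrow> (nat \<Rightarrow> ('t, 'c) token set) \<Rightarrow> ('t, 'c) selector \<Rightarrow> nat \<Rightarrow> nat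
    \<Rightarrow> ('t, 'c) path set" where
  "Pku Lp X Sel k u = fst ((step Lp X Sel k ^^ u) (P0 Lp X Sel k, {}))"

definition Zku :: "'t list set \<Rightarrow> (nat \<Rightarrow> ('t, 'c) token set) \<Rightarrow> ('t, 'c) selector \<Rightarrow> nat \<Rightarrow> nat
    \<Rightarrow> ('t, 'c) token set" where
  "Zku Lp X Sel k u = snd ((step Lp X Sel k ^^ u) (P0 Lp X Sel k, {}))"

definition Pinf :: "'t list set \<Rightarrow> (nat \<Rightarrow> ('t, 'c) token set) \<Rightarrow> ('t, 'c) selector \<Rightarrow> nat
    \<Rightarrow> ('t, 'c) path set" where
  "Pinf Lp X Sel k = (\<Union>u. Pku Lp X Sel k u)"

definition Zinf :: "'t list set \<Rightarrow> (nat \<Rightarrow> ('t, 'c) token set) \<Rightarrow> ('t, 'c) selector \<Rightarrow> nat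
    \<Rightarrow> ('t, 'c) token set" where
  "Zinf Lp X Sel k = (\<Union>u. Zku Lp X Sel k u)"

definition Z_infty :: "'t set \<Rightarrow> ('n, 't) rule set \<Rightarrow> 'n \<Rightarrow> 'c set \<Rightarrow> ('t, 'c) lexer
    \<Rightarrow> ('t, 'c) selector \<Rightarrow> 'c list \<Rightarrow> nat \<Rightarrow> ('t, 'c) token set" where
  "Z_infty \<TT> \<RR> \<SS> \<Sigma> Lex Sel D k = Zinf (L_prefix \<TT> \<RR> \<SS>) (Xk \<TT> \<Sigma> Lex D) Sel k"

definition PP :: "'t set \<Rightarrow> ('n, 't) rule set \<Rightarrow> 'n \<Rightarrow> 'c set \<Rightarrow> ('t, 'c) lexer
    \<Rightarrow> ('t, 'c) selector \<Rightarrow> 'c list \<Rightarrow> ('t, 'c) path set" where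
  "PP \<TT> \<RR> \<SS> \<Sigma> Lex Sel D = Pinf (L_prefix \<TT> \<RR> \<SS>) (Xk \<TT> \<Sigma> Lex D) Sel (length D)"

end

theory Submission
  imports Defs
begin

text \<open>Soundness: every token appended at character position k in round u lies in
  \<open>Z_k^u \<subseteq> Z_k^\<infinity>\<close>, and appending preserves membership in \<open>L_prefix\<close> by construction;
  this invariant survives the limits and the passage from \<open>P_k^\<infinity>\<close> to \<open>P_{k+1}^0\<close>.
  Completeness, by induction on the length of p = q t with k = |chars q|: q lies in some
  \<open>P_k^{u1}\<close> and t in some \<open>Z_k^{u2}\<close>; both families grow with u (for Z this is the selector axiom
  \<open>A \<subseteq> Sel A B\<close>), so q t is appended in round \<open>max u1 u2 + 1\<close>.\<close>

lemma subset_limit: "X \<subseteq> limit f X"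
  unfolding limit_def by (metis (no_types) UN_upper UNIV_I funpow_0)

lemma image_subset_limit: "f X \<subseteq> limit f X"
proof -
  have "f X = (f ^^ 1) X" by simp
  then show ?thesis unfolding limit_def by blast
qed

lemma limit_invariant:
  assumes "\<forall>x\<in>X. Q x" and "\<And>Y. \<forall>x\<in>Y. Q x \<Longrightarrow> \<forall>x\<in>f Y. Q x"
  shows "\<forall>x\<in>limit f X. Q x"
proof -
  have "\<forall>x\<in>(f ^^ n) X. Q x" for n
    by (induction n) (simp_all add: assms)
  then show ?thesis unfolding limit_def by blast
qed

lemma chars_append: "chars (p @ q) = chars p @ chars q"
  unfolding chars_def by simp

lemma length_chars_take_le: "length (chars (take i p)) \<le> length (chars p)"
  by (metis append_take_drop_id chars_append le_add1 length_append)

lemma Pku_0: "Pku Lp X Sel k 0 = P0 Lp X Sel k"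
  and Zku_0: "Zku Lp X Sel k 0 = {}"
  by (simp_all add: Pku_def Zku_def)

lemma Pku_Suc:
    "Pku Lp X Sel k (Suc u) = limit (Append Lp k (Zku Lp X Sel k (Suc u))) (Pku Lp X Sel k u)"
  and Zku_Suc:
    "Zku Lp X Sel k (Suc u) = Sel (Zku Lp X Sel k u) (Wk Lp (X k) k (Pku Lp X Sel k u))"
  by (simp_all add: Pku_def Zku_def step_def Let_def)

lemma P0_Suc: "P0 Lp X Sel (Suc k) = Pinf Lp X Sel k"
  by (simp add: Pinf_def Pku_def)

lemma Pku_mono: "u \<le> v \<Longrightarrow> Pku Lp X Sel k u \<subseteq> Pku Lp X Sel k v"
proof (induction v rule: dec_induct)
  case (step v)
  then show ?case using subset_limit by (metis Pku_Suc order_trans)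
qed simp

lemma Wk_mono: "P \<subseteq> Q \<Longrightarrow> Wk Lp Y k P \<subseteq> Wk Lp Y k Q"
  unfolding Wk_def by blast

lemma Pinf_mono: "k \<le> n \<Longrightarrow> Pinf Lp X Sel k \<subseteq> Pinf Lp X Sel n"
proof (induction n rule: dec_induct)
  case (step n)
  have "Pinf Lp X Sel n = Pku Lp X Sel (Suc n) 0"
    by (simp only: Pku_0 P0_Suc)
  then have "Pinf Lp X Sel n \<subseteq> Pinf Lp X Sel (Suc n)"
    unfolding Pinf_def by blast
  with step show ?case by blast
qed simp

definition admissible_path ::
    "'t list set \<Rightarrow> (nat \<Rightarrow> ('t, 'c) token set) \<Rightarrow> ('t, 'c) selector \<Rightarrow> nat \<Rightarrow> ('t, 'c) path \<Rightarrow> bool"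
  where
  "admissible_path Lp X Sel n p \<longleftrightarrow>
     (\<forall>i<length p. length (chars (take i p)) \<le> n \<and>
        p ! i \<in> Zinf Lp X Sel (length (chars (take i p)))) \<and> terms p \<in> Lp"

lemma admissible_path_mono:
  "admissible_path Lp X Sel n p \<Longrightarrow> n \<le> m \<Longrightarrow> admissible_path Lp X Sel m p"
  unfolding admissible_path_def by force

lemma admissible_path_snoc:
  assumes "admissible_path Lp X Sel n p" and "length (chars p) = n"
    and "t \<in> Zinf Lp X Sel n" and "terms (p @ [t]) \<in> Lp"
  shows "admissible_path Lp X Sel n (p @ [t])"
  using assms unfolding admissible_path_def by (auto simp: nth_append less_Suc_eq)

lemma admissible_path_butlast:
  assumes "admissible_path Lp X Sel n (q @ [t])" and "terms q \<in> Lp"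
  shows "admissible_path Lp X Sel (length (chars q)) q"
    and "length (chars q) \<le> n" and "t \<in> Zinf Lp X Sel (length (chars q))"
proof -
  have "q ! i \<in> Zinf Lp X Sel (length (chars (take i q)))" if "i < length q" for i
    using assms(1) that unfolding admissible_path_def
    by (auto simp: nth_append dest: spec[of _ i])
  then show "admissible_path Lp X Sel (length (chars q)) q"
    using assms(2) length_chars_take_le unfolding admissible_path_def by blast
  show "length (chars q) \<le> n" and "t \<in> Zinf Lp X Sel (length (chars q))"
    using assms(1) unfolding admissible_path_def by (auto dest: spec[of _ "length q"])
qed

lemma Append_admissible:
  assumes "\<forall>p\<in>P. admissible_path Lp X Sel n p" and "Z \<subseteq> Zinf Lp X Sel n"
  shows "\<forall>p\<in>Append Lp n Z P. admissible_path Lp X Sel n p"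
  using assms admissible_path_snoc unfolding Append_def by blast

lemma Pku_admissible_if_P0_admissible:
  assumes "\<forall>p\<in>P0 Lp X Sel k. admissible_path Lp X Sel k p"
  shows "\<forall>p\<in>Pku Lp X Sel k u. admissible_path Lp X Sel k p"
proof (induction u)
  case 0
  then show ?case using assms by (simp add: Pku_0)
next
  case (Suc u)
  have "Zku Lp X Sel k (Suc u) \<subseteq> Zinf Lp X Sel k"
    unfolding Zinf_def by blast
  with Suc show ?case
    unfolding Pku_Suc by (intro limit_invariant Append_admissible)
qed

lemma Pku_admissible:
  assumes "[] \<in> Lp"
  shows "\<forall>p\<in>Pku Lp X Sel k u. admissible_path Lp X Sel k p"
proof (induction k arbitrary: u)
  case 0
  have "\<forall>p\<in>P0 Lp X Sel 0. admissible_path Lp X Sel 0 p"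
    using assms by (simp add: admissible_path_def terms_def)
  then show ?case by (rule Pku_admissible_if_P0_admissible)
next
  case (Suc k)
  have "\<forall>p\<in>P0 Lp X Sel (Suc k). admissible_path Lp X Sel (Suc k) p"
  proof
    fix p assume "p \<in> P0 Lp X Sel (Suc k)"
    then obtain u where "p \<in> Pku Lp X Sel k u"
      unfolding P0_Suc Pinf_def by blast
    with Suc.IH have "admissible_path Lp X Sel k p" by blast
    then show "admissible_path Lp X Sel (Suc k) p"
      by (rule admissible_path_mono) simp
  qed
  then show ?case by (rule Pku_admissible_if_P0_admissible)
qed

lemma Pinf_admissible:
  assumes "[] \<in> Lp" and "p \<in> Pinf Lp X Sel k"
  shows "admissible_path Lp X Sel k p"
  using assms Pku_admissible[OF assms(1)] unfolding Pinf_def by blast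

context
  fixes T :: "'t set" and \<Sigma> :: "'c set" and Sel :: "('t, 'c) selector"
    and X :: "nat \<Rightarrow> ('t, 'c) token set"
  assumes selector: "is_selector T \<Sigma> Sel" and X_tokens: "\<And>k. X k \<subseteq> T \<times> lists \<Sigma>"
begin

lemma Sel_between:
  assumes "A \<subseteq> Wk Lp (X k) k P"
  shows "A \<subseteq> Sel A (Wk Lp (X k) k P)" and "Sel A (Wk Lp (X k) k P) \<subseteq> Wk Lp (X k) k P"
proof -
  have "Wk Lp (X k) k P \<subseteq> T \<times> lists \<Sigma>" using X_tokens unfolding Wk_def by blast
  then show "A \<subseteq> Sel A (Wk Lp (X k) k P)" and "Sel A (Wk Lp (X k) k P) \<subseteq> Wk Lp (X k) k P"
    using selector assms unfolding is_selector_def by blast+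
qed

lemma Zku_subset_Wk: "Zku Lp X Sel k u \<subseteq> Wk Lp (X k) k (Pku Lp X Sel k u)"
proof (induction u)
  case (Suc u)
  have "Zku Lp X Sel k (Suc u) \<subseteq> Wk Lp (X k) k (Pku Lp X Sel k u)"
    unfolding Zku_Suc by (rule Sel_between(2)[OF Suc])
  also have "\<dots> \<subseteq> Wk Lp (X k) k (Pku Lp X Sel k (Suc u))"
    by (intro Wk_mono Pku_mono) simp
  finally show ?case .
qed (simp add: Zku_0)

lemma Zku_mono: "u \<le> v \<Longrightarrow> Zku Lp X Sel k u \<subseteq> Zku Lp X Sel k v"
proof (induction v rule: dec_induct)
  case (step v)
  have "Zku Lp X Sel k v \<subseteq> Zku Lp X Sel k (Suc v)"
    unfolding Zku_Suc by (rule Sel_between(1)[OF Zku_subset_Wk])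
  with step show ?case by blast
qed simp

lemma snoc_in_Pinf:
  assumes q: "q \<in> Pinf Lp X Sel k" and k: "length (chars q) = k"
    and t: "t \<in> Zinf Lp X Sel k" and terms: "terms (q @ [t]) \<in> Lp"
  shows "q @ [t] \<in> Pinf Lp X Sel k"
proof -
  obtain u1 u2 where u1: "q \<in> Pku Lp X Sel k u1" and u2: "t \<in> Zku Lp X Sel k u2"
    using q t unfolding Pinf_def Zinf_def by blast
  have "q \<in> Pku Lp X Sel k (max u1 u2)"
    by (rule subsetD[OF Pku_mono u1]) simp
  moreover have "t \<in> Zku Lp X Sel k (Suc (max u1 u2))"
    by (rule subsetD[OF Zku_mono u2]) simp
  ultimately have "q @ [t] \<in> Append Lp k (Zku Lp X Sel k (Suc (max u1 u2))) (Pku Lp X Sel k (max u1 u2))"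
    unfolding Append_def using k terms by blast
  then have "q @ [t] \<in> Pku Lp X Sel k (Suc (max u1 u2))"
    unfolding Pku_Suc by (rule subsetD[OF image_subset_limit])
  then show ?thesis unfolding Pinf_def by blast
qed

lemma admissible_in_Pinf:
  assumes prefix_closed: "\<And>w. w \<in> Lp \<Longrightarrow> butlast w \<in> Lp"
  shows "admissible_path Lp X Sel n p \<Longrightarrow> p \<in> Pinf Lp X Sel n"
proof (induction p arbitrary: n rule: rev_induct)
  case Nil
  have "[] \<in> Pku Lp X Sel 0 0" by (simp add: Pku_0)
  then have "[] \<in> Pinf Lp X Sel 0" unfolding Pinf_def by blast
  then show ?case using Pinf_mono[of 0 n] by blast
next
  case (snoc t q)
  have terms: "terms (q @ [t]) \<in> Lp"
    using snoc.prems unfolding admissible_path_def by blast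
  then have "terms q \<in> Lp"
    using prefix_closed unfolding terms_def by fastforce
  note butlast = admissible_path_butlast[OF snoc.prems this]
  have "q \<in> Pinf Lp X Sel (length (chars q))"
    using snoc.IH butlast(1) .
  then have "q @ [t] \<in> Pinf Lp X Sel (length (chars q))"
    using butlast(3) terms by (rule snoc_in_Pinf[OF _ refl])
  then show ?case using Pinf_mono[OF butlast(2)] by blast
qed

end

lemma L_prefix_Nil: "[] \<in> L_prefix T R S"
  unfolding L_prefix_def derives_def by auto

lemma L_prefix_butlast: "w \<in> L_prefix T R S \<Longrightarrow> butlast w \<in> L_prefix T R S"
  unfolding L_prefix_def by (cases w rule: rev_cases) auto

theorem theorem4:
  fixes \<NN> :: "'n set" and \<TT> :: "'t set" and \<RR> :: "('n, 't) rule set" and \<SS> :: 'n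
    and \<Sigma> :: "'c set" and Lex :: "('t, 'c) lexer" and Sel :: "('t, 'c) selector"
    and D :: "'c list" and p :: "('t, 'c) path"
  assumes "wf_grammar \<NN> \<TT> \<RR> \<SS>"
    and "local_lexing \<TT> \<Sigma> Lex Sel"
    and "D \<in> lists \<Sigma>"
  shows "p \<in> PP \<TT> \<RR> \<SS> \<Sigma> Lex Sel D \<longleftrightarrow>
           ((\<forall>i<length p. length (chars (take i p)) \<le> length D \<and>
               p ! i \<in> Z_infty \<TT> \<RR> \<SS> \<Sigma> Lex Sel D (length (chars (take i p))))
            \<and> terms p \<in> L_prefix \<TT> \<RR> \<SS>)"
proof -
  let ?Lp = "L_prefix \<TT> \<RR> \<SS>" and ?X = "Xk \<TT> \<Sigma> Lex D"
  have selector: "is_selector \<TT> \<Sigma> Sel"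
    using assms(2) unfolding local_lexing_def by simp
  have X_tokens: "?X k \<subseteq> \<TT> \<times> lists \<Sigma>" for k
    unfolding Xk_def by blast
  have "p \<in> Pinf ?Lp ?X Sel (length D) \<longleftrightarrow> admissible_path ?Lp ?X Sel (length D) p"
  proof
    assume "p \<in> Pinf ?Lp ?X Sel (length D)"
    then show "admissible_path ?Lp ?X Sel (length D) p"
      by (rule Pinf_admissible[OF L_prefix_Nil])
  next
    assume admissible: "admissible_path ?Lp ?X Sel (length D) p"
    show "p \<in> Pinf ?Lp ?X Sel (length D)"
      by (rule admissible_in_Pinf[OF selector X_tokens _ admissible]) (erule L_prefix_butlast)
  qed
  then show ?thesis
    unfolding PP_def Z_infty_def admissible_path_def .
qed

end
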